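(* Let $(\mathbf Y_i)_{i\in\mathbb N}$ be a $p$-dimensional stationary time series on a probability space on which, for each $m\in\mathbb N$, $\mathbf W_{1,m},\mathbf W_{2,m}$ are independent $p$-dimensional standard Brownian motions, such that the long-run covariance matrix $\Sigma=\mathrm{Cov}(\mathbf Y_1,\mathbf Y_1)+\sum_{i\ge2}\{\mathrm{Cov}(\mathbf Y_1,\mathbf Y_i)+\mathrm{Cov}(\mathbf Y_i,\mathbf Y_1)\}$ exists and is positive definite, and for some $0<\xi<\frac12$, $$\sup_{k>m}\frac{1}{(k-m)^\xi}\Big\|\sum_{i=m+1}^k\{\mathbf Y_i-\mathbb E(\mathbf Y_1)\}-\Sigma^{1/2}\mathbf W_{1,m}(k-m)\Big\|_2=O_{\mathbb P}(1),\quad\frac{1}{m^\xi}\Big\|\sum_{i=1}^m\{\mathbf Y_i-\mathbb E(\mathbf Y_1)\}-\Sigma^{1/2}\mathbf W_{2,m}(m)\Big\|_2=O_{\mathbb P}(1).$$ For $k\ge m+1$ define $$\tilde D_m(k)=\max_{j\in\{m,\dots,k-1\}}\frac{j(k-j)}{m^{3/2}}\|\bar{\mathbf Y}_{1:j}-\bar{\mathbf Y}_{j+1:k}\|_{\Sigma^{-1}},$$ $$\bar D_m(k)=\frac{1}{\sqrt m}\max_{j\in\{m,\dots,k-1\}}\Big\|\tfrac km\Sigma^{1/2}\{\mathbf W_{2,m}(m)+\mathbf W_{1,m}(j-m)\}-\tfrac jm\Sigma^{1/2}\{\mathbf W_{2,m}(m)+\mathbf W_{1,m}(k-m)\}\Big\|_{\Sigma^{-1}}.$$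 Then for any $\eta>0$, $\sup_{k>m}(m/k)^{\frac32+\eta}|\tilde D_m(k)-\bar D_m(k)|=o_{\mathbb P}(1)$ as $m\to\infty$.
   Context: $\bar{\mathbf Y}_{j:k}=\frac1{k-j+1}\sum_{i=j}^k\mathbf Y_i$. For $M$ positive definite, $\|\mathbf y\|_M=\sqrt{(\mathbf y^\top M\mathbf y)/p}$; $\|\cdot\|_2$ is the Euclidean norm; $\Sigma^{1/2}$ is the symmetric positive-definite square root. *)

theory Defs
  imports "HOL-Probability.Probability"
begin

definition stationary_ts :: "'a measure \<Rightarrow> (nat \<Rightarrow> 'a \<Rightarrow> real^'p) \<Rightarrow> bool" where
  "stationary_ts M Y \<longleftrightarrow>
     (\<forall>I h. finite I \<longrightarrow> I \<subseteq> {1..} \<longrightarrow>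
        distr M (PiM I (\<lambda>_. borel)) (\<lambda>\<omega>. \<lambda>i\<in>I. Y (i + h) \<omega>)
      = distr M (PiM I (\<lambda>_. borel)) (\<lambda>\<omega>. \<lambda>i\<in>I. Y i \<omega>))"

definition indep_std_BMs :: "'a measure \<Rightarrow> ('i \<Rightarrow> real \<Rightarrow> 'a \<Rightarrow> real) \<Rightarrow> 'i set \<Rightarrow> bool" where
  "indep_std_BMs M X I \<longleftrightarrow>
     (\<forall>c\<in>I. \<forall>t. X c t \<in> borel_measurable M) \<and>
     (\<forall>c\<in>I. AE \<omega> in M. X c 0 \<omega> = 0 \<and> continuous_on {0..} (\<lambda>t. X c t \<omega>)) \<and>
     (\<forall>(n::nat) (t::nat \<Rightarrow> real). t 0 = 0 \<and> (\<forall>i<n. t i < t (Suc i)) \<longrightarrow>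
        prob_space.indep_vars M (\<lambda>_. borel)
          (\<lambda>(c, i) \<omega>. X c (t (Suc i)) \<omega> - X c (t i) \<omega>) (I \<times> {..<n}) \<and>
        (\<forall>c\<in>I. \<forall>i<n. distributed M lborel (\<lambda>\<omega>. X c (t (Suc i)) \<omega> - X c (t i) \<omega>)
                    (\<lambda>x. ennreal (normal_density 0 (sqrt (t (Suc i) - t i)) x))))"

(* W1, W2 are independent p-dimensional standard Brownian motions:
   all 2p coordinate processes are independent standard 1-d Brownian motions *)
definition indep_pair_BM :: "'a measure \<Rightarrow> (real \<Rightarrow> 'a \<Rightarrow> real^'p) \<Rightarrow> (real \<Rightarrow> 'a \<Rightarrow> real^'p) \<Rightarrow> bool" where
  "indep_pair_BM M W1 W2 \<longleftrightarrow>
     indep_std_BMs M (\<lambda>(b, c) t \<omega>. (if b then W1 t \<omega> else W2 t \<omega>) $ c) (UNIV :: (bool \<times> 'p) set)"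

definition mean_vec :: "'a measure \<Rightarrow> ('a \<Rightarrow> real^'p) \<Rightarrow> real^'p" where
  "mean_vec M X = (\<chi> c. LINT \<omega>|M. X \<omega> $ c)"

definition cov_mat :: "'a measure \<Rightarrow> ('a \<Rightarrow> real^'p) \<Rightarrow> ('a \<Rightarrow> real^'p) \<Rightarrow> real^'p^'p" where
  "cov_mat M X Z = (\<chi> a b. LINT \<omega>|M. (X \<omega> $ a - mean_vec M X $ a) * (Z \<omega> $ b - mean_vec M Z $ b))"

definition lr_cov :: "'a measure \<Rightarrow> (nat \<Rightarrow> 'a \<Rightarrow> real^'p) \<Rightarrow> real^'p^'p" where
  "lr_cov M Y = cov_mat M (Y 1) (Y 1) +
     (\<Sum>i. cov_mat M (Y 1) (Y (i + 2)) + cov_mat M (Y (i + 2)) (Y 1))"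

definition pos_def_mat :: "real^'p^'p \<Rightarrow> bool" where
  "pos_def_mat A \<longleftrightarrow> transpose A = A \<and> (\<forall>x. x \<noteq> 0 \<longrightarrow> x \<bullet> (A *v x) > 0)"

definition mat_sqrt :: "real^'p^'p \<Rightarrow> real^'p^'p" where
  "mat_sqrt A = (THE S. pos_def_mat S \<and> S ** S = A)"

definition Mnorm :: "real^'p^'p \<Rightarrow> real^'p \<Rightarrow> real" where
  "Mnorm A y = sqrt ((y \<bullet> (A *v y)) / real CARD('p))"

definition Ybar :: "(nat \<Rightarrow> 'a \<Rightarrow> real^'p) \<Rightarrow> nat \<Rightarrow> nat \<Rightarrow> 'a \<Rightarrow> real^'p" where
  "Ybar Y j k \<omega> = (1 / real (k - j + 1)) *\<^sub>R (\<Sum>i\<in>{j..k}. Y i \<omega>)"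

definition Dtilde :: "real^'p^'p \<Rightarrow> (nat \<Rightarrow> 'a \<Rightarrow> real^'p) \<Rightarrow> nat \<Rightarrow> nat \<Rightarrow> 'a \<Rightarrow> real" where
  "Dtilde \<Sigma> Y m k \<omega> = Max ((\<lambda>j. real (j * (k - j)) / real m powr (3/2) *
        Mnorm (matrix_inv \<Sigma>) (Ybar Y 1 j \<omega> - Ybar Y (j + 1) k \<omega>)) ` {m..<k})"

definition Dbar :: "real^'p^'p \<Rightarrow> (real \<Rightarrow> 'a \<Rightarrow> real^'p) \<Rightarrow> (real \<Rightarrow> 'a \<Rightarrow> real^'p)
                      \<Rightarrow> nat \<Rightarrow> nat \<Rightarrow> 'a \<Rightarrow> real" where
  "Dbar \<Sigma> W1 W2 m k \<omega> = (1 / sqrt (real m)) * Max ((\<lambda>j. Mnorm (matrix_inv \<Sigma>)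
        ((real k / real m) *\<^sub>R (mat_sqrt \<Sigma> *v (W2 (real m) \<omega> + W1 (real (j - m)) \<omega>))
       - (real j / real m) *\<^sub>R (mat_sqrt \<Sigma> *v (W2 (real m) \<omega> + W1 (real (k - m)) \<omega>)))) ` {m..<k})"

end

theory Submission
  imports Defs
begin

(* Write S n = Y 1 + ... + Y n.  The identity
     j (k - j) (Ybar 1 j - Ybar (j + 1) k) = k S j - j S k
   shows that m^(3/2) Dtilde m k and m^(3/2) Dbar m k are maxima over m <= j < k of the
   Sigma^-1-norm of k X j - j X k and of k Z j - j Z k respectively, where
   X n = S n - n E(Y 1) and Z n = Sigma^(1/2) (W2 m + W1 (n - m)).  This norm is a seminorm
   dominated by a multiple of the Euclidean norm, so |Dtilde - Dbar| is at most a constant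
   times k / m^(3/2) times max_{m <= n <= k} |X n - Z n|.  Splitting X n - Z n at n = m,
   the two strong approximations bound it by O_P(k^xi) uniformly in k > m (for n = m one
   uses W1 m 0 = 0 almost surely).  After weighting with (m/k)^(3/2 + eta) what remains is
   O_P(m^(xi - 1/2)), which tends to 0 because xi < 1/2. *)

lemma nonneg_quadratic_discrim_le:
  fixes a b c :: real
  assumes "\<And>t. 0 \<le> a + t * b + t\<^sup>2 * c" and "0 \<le> c"
  shows "b\<^sup>2 \<le> 4 * a * c"
proof (cases "c = 0")
  case True
  have "b = 0"
  proof (rule ccontr)
    assume "b \<noteq> 0"
    have "0 \<le> a + (- (a + 1) / b) * b + (- (a + 1) / b)\<^sup>2 * c" by (rule assms(1))
    also have "\<dots> = -1" using True \<open>b \<noteq> 0\<close> by simp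
    finally show False by simp
  qed
  then show ?thesis using True by simp
next
  case False
  then have "0 < c" using assms(2) by simp
  have "0 \<le> a + (- b / (2 * c)) * b + (- b / (2 * c))\<^sup>2 * c" by (rule assms(1))
  also have "\<dots> = a - b\<^sup>2 / (4 * c)" using \<open>0 < c\<close> by (simp add: field_simps power2_eq_square)
  finally show ?thesis using \<open>0 < c\<close> by (simp add: field_simps)
qed

lemma sqrt_quadratic_form_triangle:
  fixes A :: "real^'n^'n"
  assumes psd: "\<And>x. 0 \<le> x \<bullet> (A *v x)"
  shows "sqrt ((x + y) \<bullet> (A *v (x + y))) \<le> sqrt (x \<bullet> (A *v x)) + sqrt (y \<bullet> (A *v y))"
proof -
  define a where "a = x \<bullet> (A *v x)"
  define b where "b = x \<bullet> (A *v y) + y \<bullet> (A *v x)"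
  define c where "c = y \<bullet> (A *v y)"
  have expand: "(x + t *\<^sub>R y) \<bullet> (A *v (x + t *\<^sub>R y)) = a + t * b + t\<^sup>2 * c" for t
    by (simp add: a_def b_def c_def matrix_vector_right_distrib matrix_vector_mult_scaleR
        inner_add_left inner_add_right algebra_simps power2_eq_square)
  have "0 \<le> a" "0 \<le> c" using psd by (simp_all add: a_def c_def)
  have "b\<^sup>2 \<le> 4 * a * c"
    using psd expand \<open>0 \<le> c\<close> by (metis nonneg_quadratic_discrim_le)
  then have "b \<le> sqrt (4 * a * c)"
    by (metis real_sqrt_abs real_sqrt_le_mono abs_ge_self order_trans)
  also have "\<dots> = 2 * sqrt a * sqrt c" by (simp add: real_sqrt_mult)
  finally have "(x + y) \<bullet> (A *v (x + y)) \<le> (sqrt a + sqrt c)\<^sup>2"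
    using expand[of 1] \<open>0 \<le> a\<close> \<open>0 \<le> c\<close> by (simp add: power2_eq_square algebra_simps)
  then show ?thesis
    using \<open>0 \<le> a\<close> \<open>0 \<le> c\<close> real_sqrt_le_mono by (fastforce simp: a_def c_def)
qed

lemma pos_def_mat_inv_nonneg:
  fixes S :: "real^'n^'n"
  assumes "pos_def_mat S"
  shows "0 \<le> y \<bullet> (matrix_inv S *v y)"
proof -
  have "S *v x = 0 \<Longrightarrow> x = 0" for x
    using assms unfolding pos_def_mat_def by (metis inner_zero_right less_irrefl)
  then have "invertible S" using matrix_left_invertible_ker invertible_left_inverse by blast
  then have "S ** matrix_inv S = mat 1"
    unfolding invertible_def matrix_inv_def by (metis (mono_tags, lifting) someI_ex)
  then have "y = S *v (matrix_inv S *v y)"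
    by (metis matrix_vector_mul_assoc matrix_vector_mul_lid)
  then have "y \<bullet> (matrix_inv S *v y) = (matrix_inv S *v y) \<bullet> (S *v (matrix_inv S *v y))"
    by (metis inner_commute)
  also have "\<dots> \<ge> 0"
    using assms unfolding pos_def_mat_def by (cases "matrix_inv S *v y = 0") (auto intro: less_imp_le)
  finally show ?thesis .
qed

lemma Mnorm_altdef: "Mnorm A y = sqrt (y \<bullet> (A *v y)) / sqrt (real CARD('n))"
  for A :: "real^'n^'n"
  by (simp add: Mnorm_def real_sqrt_divide)

lemma Mnorm_triangle:
  fixes A :: "real^'n^'n"
  assumes "\<And>x. 0 \<le> x \<bullet> (A *v x)"
  shows "Mnorm A (x + y) \<le> Mnorm A x + Mnorm A y"
  using sqrt_quadratic_form_triangle[OF assms, of x y] unfolding Mnorm_altdef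
  by (simp add: add_divide_distrib[symmetric] divide_right_mono)

lemma Mnorm_scaleR: "Mnorm A (c *\<^sub>R x) = \<bar>c\<bar> * Mnorm A x"
  for A :: "real^'n^'n"
proof -
  have "(c *\<^sub>R x) \<bullet> (A *v (c *\<^sub>R x)) = c\<^sup>2 * (x \<bullet> (A *v x))"
    by (simp add: matrix_vector_mult_scaleR power2_eq_square)
  then show ?thesis unfolding Mnorm_altdef by (simp add: real_sqrt_mult)
qed

lemma Mnorm_minus_commute: "Mnorm A (x - y) = Mnorm A (y - x)"
  for A :: "real^'n^'n"
  using Mnorm_scaleR[of A "-1" "x - y"] by simp

lemma abs_Mnorm_diff_le:
  fixes A :: "real^'n^'n"
  assumes "\<And>x. 0 \<le> x \<bullet> (A *v x)"
  shows "\<bar>Mnorm A x - Mnorm A y\<bar> \<le> Mnorm A (x - y)"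
  using Mnorm_triangle[OF assms, of "x - y" y] Mnorm_triangle[OF assms, of "y - x" x]
    Mnorm_minus_commute[of A x y]
  by simp

lemma Mnorm_le_norm:
  fixes A :: "real^'n^'n"
  assumes psd: "\<And>x. 0 \<le> x \<bullet> (A *v x)"
  obtains K where "0 < K" "\<And>v. Mnorm A v \<le> K * norm v"
proof -
  obtain B where "0 < B" and B: "\<And>x. norm (A *v x) \<le> B * norm x"
    using linear_bounded_pos[OF matrix_vector_mul_linear] by blast
  have "Mnorm A v \<le> sqrt B * norm v" for v
  proof -
    have "v \<bullet> (A *v v) \<le> norm v * norm (A *v v)" by (metis Cauchy_Schwarz_ineq2 abs_le_D1)
    also have "\<dots> \<le> norm v * (B * norm v)" by (rule mult_left_mono[OF B]) simp
    also have "\<dots> = B * (norm v)\<^sup>2" by (simp add: power2_eq_square)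
    finally have quadratic_le: "v \<bullet> (A *v v) \<le> B * (norm v)\<^sup>2" .
    have "Mnorm A v \<le> sqrt (v \<bullet> (A *v v))" unfolding Mnorm_def
      using psd[of v] by (intro real_sqrt_le_mono) (simp add: divide_le_eq mult_le_cancel_left1)
    also have "\<dots> \<le> sqrt (B * (norm v)\<^sup>2)" using quadratic_le real_sqrt_le_mono by blast
    also have "\<dots> = sqrt B * norm v" by (simp add: real_sqrt_mult)
    finally show ?thesis .
  qed
  then show ?thesis using \<open>0 < B\<close> that[of "sqrt B"] by simp
qed

lemma abs_Max_image_diff_le:
  fixes f g :: "'a \<Rightarrow> real"
  assumes "finite J" "J \<noteq> {}" "\<And>j. j \<in> J \<Longrightarrow> \<bar>f j - g j\<bar> \<le> b"
  shows "\<bar>Max (f ` J) - Max (g ` J)\<bar> \<le> b"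
proof -
  have "Max (f ` J) \<in> f ` J" "Max (g ` J) \<in> g ` J" using assms by (simp_all add: Max_in)
  then obtain i j where "i \<in> J" "Max (f ` J) = f i" "j \<in> J" "Max (g ` J) = g j" by blast
  moreover have "g i \<le> Max (g ` J)" "f j \<le> Max (f ` J)"
    using \<open>i \<in> J\<close> \<open>j \<in> J\<close> assms(1) by (auto intro: Max_ge)
  ultimately show ?thesis using assms(3)[of i] assms(3)[of j] by linarith
qed

lemma Max_image_mult_left:
  fixes g :: "'a \<Rightarrow> real"
  assumes "finite J" "J \<noteq> {}" "0 \<le> c"
  shows "c * Max (g ` J) = Max ((\<lambda>j. c * g j) ` J)"
proof -
  have "mono ((*) c)" using assms(3) by (simp add: mono_def mult_left_mono)
  then show ?thesis using mono_Max_commute[of "(*) c" "g ` J"] assms by (simp add: image_image)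
qed

lemma powr_three_halves: "0 \<le> x \<Longrightarrow> x powr (3/2) = x * sqrt x"
  for x :: real
  using powr_add[of x 1 "1/2"] by (cases "x = 0") (simp_all add: powr_half_sqrt)

lemma scaleR_Ybar_diff:
  fixes Y :: "nat \<Rightarrow> 'a \<Rightarrow> real^'p"
  assumes "1 \<le> j" "j < k"
  shows "real (j * (k - j)) *\<^sub>R (Ybar Y 1 j \<omega> - Ybar Y (j + 1) k \<omega>)
       = real k *\<^sub>R (\<Sum>i\<in>{1..j}. Y i \<omega>) - real j *\<^sub>R (\<Sum>i\<in>{1..k}. Y i \<omega>)"
proof -
  define Sj where "Sj = (\<Sum>i\<in>{1..j}. Y i \<omega>)"
  define U where "U = (\<Sum>i\<in>{j+1..k}. Y i \<omega>)"
  have "{1..k} = {1..j} \<union> {j+1..k}" using assms by auto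
  then have Sk: "(\<Sum>i\<in>{1..k}. Y i \<omega>) = Sj + U"
    unfolding Sj_def U_def by (simp add: sum.union_disjoint ivl_disj_int)
  have "Ybar Y 1 j \<omega> = (1 / real j) *\<^sub>R Sj" "Ybar Y (j + 1) k \<omega> = (1 / real (k - j)) *\<^sub>R U"
    unfolding Ybar_def Sj_def U_def using assms by (simp_all add: Suc_diff_Suc)
  moreover have "0 < real j" "0 < real (k - j)" using assms by auto
  ultimately have "real (j * (k - j)) *\<^sub>R (Ybar Y 1 j \<omega> - Ybar Y (j + 1) k \<omega>)
      = real (k - j) *\<^sub>R Sj - real j *\<^sub>R U"
    by (simp add: scaleR_diff_right)
  also have "\<dots> = real k *\<^sub>R Sj - real j *\<^sub>R (Sj + U)"
    using assms by (simp add: of_nat_diff algebra_simps)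
  finally show ?thesis unfolding Sk Sj_def .
qed

lemma Dtilde_eq_Max_Mnorm:
  fixes Y :: "nat \<Rightarrow> 'a \<Rightarrow> real^'p"
  assumes "1 \<le> m"
  shows "Dtilde S Y m k \<omega> = (MAX j\<in>{m..<k}. Mnorm (matrix_inv S)
           ((1 / real m powr (3/2)) *\<^sub>R (real k *\<^sub>R (\<Sum>i\<in>{1..j}. Y i \<omega>) - real j *\<^sub>R (\<Sum>i\<in>{1..k}. Y i \<omega>))))"
proof -
  have "real (j * (k - j)) / real m powr (3/2) * Mnorm (matrix_inv S) (Ybar Y 1 j \<omega> - Ybar Y (j + 1) k \<omega>)
      = Mnorm (matrix_inv S) ((1 / real m powr (3/2)) *\<^sub>R
          (real k *\<^sub>R (\<Sum>i\<in>{1..j}. Y i \<omega>) - real j *\<^sub>R (\<Sum>i\<in>{1..k}. Y i \<omega>)))"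
    if "j \<in> {m..<k}" for j
  proof -
    have "1 \<le> j" "j < k" using that assms by auto
    have "real (j * (k - j)) / real m powr (3/2) * Mnorm (matrix_inv S) (Ybar Y 1 j \<omega> - Ybar Y (j + 1) k \<omega>)
        = Mnorm (matrix_inv S) ((1 / real m powr (3/2)) *\<^sub>R
            (real (j * (k - j)) *\<^sub>R (Ybar Y 1 j \<omega> - Ybar Y (j + 1) k \<omega>)))"
      by (simp add: Mnorm_scaleR)
    also have "\<dots> = Mnorm (matrix_inv S) ((1 / real m powr (3/2)) *\<^sub>R
        (real k *\<^sub>R (\<Sum>i\<in>{1..j}. Y i \<omega>) - real j *\<^sub>R (\<Sum>i\<in>{1..k}. Y i \<omega>)))"
      using \<open>1 \<le> j\<close> \<open>j < k\<close> by (simp only: scaleR_Ybar_diff)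
    finally show ?thesis .
  qed
  then show ?thesis unfolding Dtilde_def by (intro arg_cong[where f = Max] image_cong) auto
qed

lemma Dbar_eq_Max_Mnorm:
  fixes W1 W2 :: "real \<Rightarrow> 'a \<Rightarrow> real^'p" and S :: "real^'p^'p"
  assumes "m < k"
  shows "Dbar S W1 W2 m k \<omega> = (MAX j\<in>{m..<k}. Mnorm (matrix_inv S) ((1 / real m powr (3/2)) *\<^sub>R
           (real k *\<^sub>R (mat_sqrt S *v (W2 (real m) \<omega> + W1 (real (j - m)) \<omega>))
          - real j *\<^sub>R (mat_sqrt S *v (W2 (real m) \<omega> + W1 (real (k - m)) \<omega>)))))"
proof -
  have "1 / sqrt (real m) * Mnorm (matrix_inv S) ((real k / real m) *\<^sub>R x - (real j / real m) *\<^sub>R z)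
      = Mnorm (matrix_inv S) ((1 / real m powr (3/2)) *\<^sub>R (real k *\<^sub>R x - real j *\<^sub>R z))" for j x z
  proof -
    have "(1 / real m powr (3/2)) *\<^sub>R (real k *\<^sub>R x - real j *\<^sub>R z)
        = (1 / sqrt (real m)) *\<^sub>R ((real k / real m) *\<^sub>R x - (real j / real m) *\<^sub>R z)"
      unfolding powr_three_halves[OF of_nat_0_le_iff] by (simp add: scaleR_diff_right mult.commute)
    then show ?thesis by (simp add: Mnorm_scaleR)
  qed
  moreover have "finite {m..<k}" "{m..<k} \<noteq> {}" using assms by auto
  ultimately show ?thesis
    unfolding Dbar_def by (subst Max_image_mult_left) simp_all
qed

lemma Dtilde_Dbar_diff_le:
  fixes Y :: "nat \<Rightarrow> 'a \<Rightarrow> real^'p" and W1 W2 :: "real \<Rightarrow> 'a \<Rightarrow> real^'p"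
    and S :: "real^'p^'p"
  assumes psd: "\<And>x. 0 \<le> x \<bullet> (matrix_inv S *v x)"
    and K: "\<And>v. Mnorm (matrix_inv S) v \<le> K * norm v" "0 \<le> K"
    and m: "1 \<le> m" "m < k"
    and err: "\<And>n. m \<le> n \<Longrightarrow> n \<le> k \<Longrightarrow> norm ((\<Sum>i\<in>{1..n}. Y i \<omega>) - real n *\<^sub>R \<mu>
               - mat_sqrt S *v (W2 (real m) \<omega> + W1 (real (n - m)) \<omega>)) \<le> E"
  shows "\<bar>Dtilde S Y m k \<omega> - Dbar S W1 W2 m k \<omega>\<bar> \<le> K * (2 * real k * E) / real m powr (3/2)"
proof -
  define c where "c = 1 / real m powr (3/2)"
  define Sn where "Sn n = (\<Sum>i\<in>{1..n}. Y i \<omega>)" for n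
  define B where "B n = mat_sqrt S *v (W2 (real m) \<omega> + W1 (real (n - m)) \<omega>)" for n
  define e where "e n = Sn n - real n *\<^sub>R \<mu> - B n" for n
  have "0 < c" unfolding c_def using m by simp
  have "\<bar>Mnorm (matrix_inv S) (c *\<^sub>R (real k *\<^sub>R Sn j - real j *\<^sub>R Sn k))
        - Mnorm (matrix_inv S) (c *\<^sub>R (real k *\<^sub>R B j - real j *\<^sub>R B k))\<bar>
      \<le> K * (2 * real k * E) / real m powr (3/2)" if "j \<in> {m..<k}" for j
  proof -
    have "norm (e j) \<le> E" "norm (e k) \<le> E"
      using err that m unfolding e_def Sn_def B_def by auto
    have "norm (real k *\<^sub>R e j - real j *\<^sub>R e k) \<le> real k * norm (e j) + real j * norm (e k)"
      using norm_triangle_ineq4[of "real k *\<^sub>R e j" "real j *\<^sub>R e k"] by simp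
    also have "\<dots> \<le> real k * E + real k * E"
      using \<open>norm (e j) \<le> E\<close> \<open>norm (e k) \<le> E\<close> that by (intro add_mono mult_mono) auto
    finally have error_le: "norm (real k *\<^sub>R e j - real j *\<^sub>R e k) \<le> 2 * real k * E" by (simp add: mult_ac)
    have "c *\<^sub>R (real k *\<^sub>R Sn j - real j *\<^sub>R Sn k) - c *\<^sub>R (real k *\<^sub>R B j - real j *\<^sub>R B k)
        = c *\<^sub>R (real k *\<^sub>R e j - real j *\<^sub>R e k)"
      unfolding e_def by (simp add: algebra_simps)
    then have "\<bar>Mnorm (matrix_inv S) (c *\<^sub>R (real k *\<^sub>R Sn j - real j *\<^sub>R Sn k))
          - Mnorm (matrix_inv S) (c *\<^sub>R (real k *\<^sub>R B j - real j *\<^sub>R B k))\<bar>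
        \<le> Mnorm (matrix_inv S) (c *\<^sub>R (real k *\<^sub>R e j - real j *\<^sub>R e k))"
      using abs_Mnorm_diff_le[OF psd] by metis
    also have "\<dots> \<le> K * (c * norm (real k *\<^sub>R e j - real j *\<^sub>R e k))"
      using K(1)[of "c *\<^sub>R (real k *\<^sub>R e j - real j *\<^sub>R e k)"] \<open>0 < c\<close> by simp
    also have "\<dots> \<le> K * (c * (2 * real k * E))"
      using error_le K(2) \<open>0 < c\<close> by (simp add: mult_left_mono)
    finally show ?thesis by (simp add: c_def)
  qed
  then show ?thesis
    unfolding Dtilde_eq_Max_Mnorm[OF m(1)] Dbar_eq_Max_Mnorm[OF m(2)] c_def[symmetric]
      Sn_def[symmetric] B_def[symmetric]
    using m by (intro abs_Max_image_diff_le) auto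
qed

lemma partial_sum_error_split:
  fixes y :: "nat \<Rightarrow> real^'p" and R :: "real^'p^'p"
  assumes "m \<le> n"
  shows "(\<Sum>i\<in>{1..n}. y i) - real n *\<^sub>R \<mu> - R *v (w2 + w1)
       = ((\<Sum>i\<in>{1..m}. y i - \<mu>) - R *v w2) + ((\<Sum>i\<in>{m+1..n}. y i - \<mu>) - R *v w1)"
proof -
  have "{1..n} = {1..m} \<union> {m+1..n}" using assms by auto
  then have "(\<Sum>i\<in>{1..n}. y i - \<mu>) = (\<Sum>i\<in>{1..m}. y i - \<mu>) + (\<Sum>i\<in>{m+1..n}. y i - \<mu>)"
    by (simp add: sum.union_disjoint ivl_disj_int)
  moreover have "(\<Sum>i\<in>{1..n}. y i) - real n *\<^sub>R \<mu> = (\<Sum>i\<in>{1..n}. y i - \<mu>)"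
    by (simp add: sum_subtractf sum_constant_scaleR del: sum_constant)
  ultimately show ?thesis by (simp add: matrix_vector_right_distrib algebra_simps)
qed

lemma partial_sum_error_le:
  fixes y :: "nat \<Rightarrow> real^'p" and w1 :: "real \<Rightarrow> real^'p" and R :: "real^'p^'p"
  assumes "m \<le> n" "n \<le> k" "0 \<le> \<xi>" "w1 0 = 0"
    and bound1: "\<And>n. m < n \<Longrightarrow> norm ((\<Sum>i\<in>{m+1..n}. y i - \<mu>) - R *v w1 (real (n - m))) \<le> C1 * real (n - m) powr \<xi>"
    and bound2: "norm ((\<Sum>i\<in>{1..m}. y i - \<mu>) - R *v w2) \<le> C2 * real m powr \<xi>"
  shows "norm ((\<Sum>i\<in>{1..n}. y i) - real n *\<^sub>R \<mu> - R *v (w2 + w1 (real (n - m))))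
       \<le> (\<bar>C1\<bar> + \<bar>C2\<bar>) * real k powr \<xi>"
proof -
  have "norm ((\<Sum>i\<in>{m+1..n}. y i - \<mu>) - R *v w1 (real (n - m))) \<le> \<bar>C1\<bar> * real k powr \<xi>"
  proof (cases "m < n")
    case True
    have "C1 * real (n - m) powr \<xi> \<le> \<bar>C1\<bar> * real k powr \<xi>"
      using assms(2,3) by (intro mult_mono powr_mono2) auto
    then show ?thesis using bound1[OF True] by linarith
  qed (use assms(1,4) in simp)
  moreover have "C2 * real m powr \<xi> \<le> \<bar>C2\<bar> * real k powr \<xi>"
    using assms(1-3) by (intro mult_mono powr_mono2) auto
  ultimately show ?thesis
    unfolding partial_sum_error_split[OF assms(1)] distrib_right
    using bound2 norm_triangle_ineq[of "(\<Sum>i\<in>{1..m}. y i - \<mu>) - R *v w2"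
        "(\<Sum>i\<in>{m+1..n}. y i - \<mu>) - R *v w1 (real (n - m))"]
    by linarith
qed

lemma powr_weight_le:
  fixes m k \<xi> \<eta> :: real
  assumes "1 \<le> m" "m \<le> k" "\<xi> < 1/2" "0 < \<eta>"
  shows "(m / k) powr (3/2 + \<eta>) * (k * k powr \<xi> / m powr (3/2)) \<le> m powr (\<xi> - 1/2)"
proof -
  have "0 < m" "0 < k" using assms by auto
  then have "(m / k) powr (3/2 + \<eta>) * (k * k powr \<xi> / m powr (3/2))
      = (m powr (3/2 + \<eta>) / m powr (3/2)) * (k powr (1 + \<xi>) / k powr (3/2 + \<eta>))"
    by (simp add: powr_divide powr_add)
  also have "\<dots> = m powr \<eta> * k powr (\<xi> - 1/2 - \<eta>)"
    using \<open>0 < m\<close> \<open>0 < k\<close> by (simp add: powr_diff[symmetric] algebra_simps)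
  also have "\<dots> \<le> m powr \<eta> * m powr (\<xi> - 1/2 - \<eta>)"
    using assms \<open>0 < m\<close> by (intro mult_left_mono powr_mono2') auto
  also have "\<dots> = m powr (\<xi> - 1/2)" by (simp add: powr_add[symmetric])
  finally show ?thesis .
qed

lemma weighted_Dtilde_Dbar_diff_le:
  fixes Y :: "nat \<Rightarrow> 'a \<Rightarrow> real^'p" and W1 W2 :: "real \<Rightarrow> 'a \<Rightarrow> real^'p"
    and S :: "real^'p^'p"
  assumes psd: "\<And>x. 0 \<le> x \<bullet> (matrix_inv S *v x)"
    and K: "\<And>v. Mnorm (matrix_inv S) v \<le> K * norm v" "0 \<le> K"
    and "1 \<le> m" "m < k" "0 \<le> \<xi>" "\<xi> < 1/2" "0 < \<eta>" "W1 0 \<omega> = 0"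
    and "\<And>n. m < n \<Longrightarrow> norm ((\<Sum>i\<in>{m+1..n}. Y i \<omega> - \<mu>) - mat_sqrt S *v W1 (real (n - m)) \<omega>)
           \<le> C1 * real (n - m) powr \<xi>"
    and "norm ((\<Sum>i\<in>{1..m}. Y i \<omega> - \<mu>) - mat_sqrt S *v W2 (real m) \<omega>) \<le> C2 * real m powr \<xi>"
  shows "(real m / real k) powr (3/2 + \<eta>) * \<bar>Dtilde S Y m k \<omega> - Dbar S W1 W2 m k \<omega>\<bar>
       \<le> 2 * K * (\<bar>C1\<bar> + \<bar>C2\<bar>) * real m powr (\<xi> - 1/2)"
proof -
  define C where "C = \<bar>C1\<bar> + \<bar>C2\<bar>"
  have "\<bar>Dtilde S Y m k \<omega> - Dbar S W1 W2 m k \<omega>\<bar> \<le> K * (2 * real k * (C * real k powr \<xi>)) / real m powr (3/2)"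
    using assms partial_sum_error_le[of m _ k \<xi> "\<lambda>t. W1 t \<omega>" "\<lambda>i. Y i \<omega>" \<mu> "mat_sqrt S" C1 "W2 (real m) \<omega>" C2]
    unfolding C_def by (intro Dtilde_Dbar_diff_le) auto
  then have "(real m / real k) powr (3/2 + \<eta>) * \<bar>Dtilde S Y m k \<omega> - Dbar S W1 W2 m k \<omega>\<bar>
      \<le> (real m / real k) powr (3/2 + \<eta>) * (K * (2 * real k * (C * real k powr \<xi>)) / real m powr (3/2))"
    by (rule mult_left_mono) simp
  also have "\<dots> = 2 * K * C * ((real m / real k) powr (3/2 + \<eta>) * (real k * real k powr \<xi> / real m powr (3/2)))"
    by (simp add: mult_ac)
  also have "\<dots> \<le> 2 * K * C * real m powr (\<xi> - 1/2)"
    using assms K(2) by (intro mult_left_mono powr_weight_le) (auto simp: C_def)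
  finally show ?thesis unfolding C_def .
qed

lemma approx_error_gt_if_weighted_diff_gt:
  fixes Y :: "nat \<Rightarrow> 'a \<Rightarrow> real^'p" and W1 W2 :: "real \<Rightarrow> 'a \<Rightarrow> real^'p"
    and S :: "real^'p^'p"
  assumes psd: "\<And>x. 0 \<le> x \<bullet> (matrix_inv S *v x)"
    and K: "\<And>v. Mnorm (matrix_inv S) v \<le> K * norm v" "0 \<le> K"
    and "1 \<le> m" "0 \<le> \<xi>" "\<xi> < 1/2" "0 < \<eta>" "W1 0 \<omega> = 0"
    and small: "2 * K * (\<bar>C1\<bar> + \<bar>C2\<bar>) * real m powr (\<xi> - 1/2) < \<epsilon>"
    and large: "\<exists>k>m. (real m / real k) powr (3/2 + \<eta>) * \<bar>Dtilde S Y m k \<omega> - Dbar S W1 W2 m k \<omega>\<bar> > \<epsilon>"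
  shows "(\<exists>n>m. norm ((\<Sum>i\<in>{m+1..n}. Y i \<omega> - \<mu>) - mat_sqrt S *v W1 (real (n - m)) \<omega>)
            > C1 * real (n - m) powr \<xi>)
       \<or> norm ((\<Sum>i\<in>{1..m}. Y i \<omega> - \<mu>) - mat_sqrt S *v W2 (real m) \<omega>) > C2 * real m powr \<xi>"
proof (rule ccontr)
  assume "\<not> ?thesis"
  then have "\<And>n. m < n \<Longrightarrow> norm ((\<Sum>i\<in>{m+1..n}. Y i \<omega> - \<mu>) - mat_sqrt S *v W1 (real (n - m)) \<omega>)
              \<le> C1 * real (n - m) powr \<xi>"
    and "norm ((\<Sum>i\<in>{1..m}. Y i \<omega> - \<mu>) - mat_sqrt S *v W2 (real m) \<omega>) \<le> C2 * real m powr \<xi>"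
    by (meson not_less)+
  moreover obtain k where "m < k"
    and "(real m / real k) powr (3/2 + \<eta>) * \<bar>Dtilde S Y m k \<omega> - Dbar S W1 W2 m k \<omega>\<bar> > \<epsilon>"
    using large by blast
  ultimately show False
    using weighted_Dtilde_Dbar_diff_le[where Y = Y and ?W1.0 = W1 and \<omega> = \<omega>,
        OF psd K \<open>1 \<le> m\<close> \<open>m < k\<close> assms(5-8)] small by fastforce
qed

lemma indep_pair_BM_coordinates:
  assumes "indep_pair_BM M W1 W2"
  shows "(\<lambda>\<omega>. W1 t \<omega> $ c) \<in> borel_measurable M" "(\<lambda>\<omega>. W2 t \<omega> $ c) \<in> borel_measurable M"
    and "AE \<omega> in M. W1 0 \<omega> $ c = 0"
proof -
  let ?X = "\<lambda>(b, c) t \<omega>. (if b then W1 t \<omega> else W2 t \<omega>) $ c"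
  have X: "indep_std_BMs M ?X UNIV" using assms unfolding indep_pair_BM_def .
  have "(\<lambda>\<omega>. ?X (b, c) t \<omega>) \<in> borel_measurable M" for b
    using X unfolding indep_std_BMs_def by blast
  from this[of True] this[of False]
  show "(\<lambda>\<omega>. W1 t \<omega> $ c) \<in> borel_measurable M" "(\<lambda>\<omega>. W2 t \<omega> $ c) \<in> borel_measurable M"
    by simp_all
  have "AE \<omega> in M. ?X (True, c) 0 \<omega> = 0 \<and> continuous_on {0..} (\<lambda>t. ?X (True, c) t \<omega>)"
    using X unfolding indep_std_BMs_def by blast
  then show "AE \<omega> in M. W1 0 \<omega> $ c = 0"
    by (rule eventually_mono) simp
qed

lemma indep_pair_BM_measurable:
  assumes "indep_pair_BM M W1 W2"
  shows "W1 t \<in> borel_measurable M" "W2 t \<in> borel_measurable M"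
  using indep_pair_BM_coordinates[OF assms]
  by (subst borel_measurable_euclidean_space; simp add: Basis_vec_def inner_axis)+

lemma indep_pair_BM_AE_zero:
  assumes "indep_pair_BM M W1 W2"
  shows "AE \<omega> in M. W1 0 \<omega> = 0"
proof -
  have "AE \<omega> in M. \<forall>c\<in>UNIV. W1 0 \<omega> $ c = 0"
    using indep_pair_BM_coordinates(3)[OF assms] by (intro AE_finite_allI) auto
  then show ?thesis by (rule eventually_mono) (simp add: vec_eq_iff)
qed

lemma borel_measurable_matrix_vector_mult [measurable (raw)]:
  fixes A :: "real^'n^'m"
  assumes "f \<in> borel_measurable M"
  shows "(\<lambda>x. A *v f x) \<in> borel_measurable M"
  using measurable_compose[OF assms borel_measurable_continuous_onI[OF matrix_vector_mult_linear_continuous_on[of UNIV A]]]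
  by simp

lemma eventually_AE_approx_error_gt_if_weighted_diff_gt:
  fixes Y :: "nat \<Rightarrow> 'a \<Rightarrow> real^'p" and W1 W2 :: "nat \<Rightarrow> real \<Rightarrow> 'a \<Rightarrow> real^'p"
    and S :: "real^'p^'p"
  assumes "\<forall>m. indep_pair_BM M (W1 m) (W2 m)" "pos_def_mat S" "0 < \<xi>" "\<xi> < 1/2" "0 < \<eta>" "0 < \<epsilon>"
  shows "\<forall>\<^sub>F m in sequentially. AE \<omega> in M.
           (\<exists>k>m. (real m / real k) powr (3/2 + \<eta>) * \<bar>Dtilde S Y m k \<omega> - Dbar S (W1 m) (W2 m) m k \<omega>\<bar> > \<epsilon>)
       \<longrightarrow> (\<exists>n>m. norm ((\<Sum>i\<in>{m+1..n}. Y i \<omega> - \<mu>) - mat_sqrt S *v W1 m (real (n - m)) \<omega>)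
                    > C1 * real (n - m) powr \<xi>)
         \<or> norm ((\<Sum>i\<in>{1..m}. Y i \<omega> - \<mu>) - mat_sqrt S *v W2 m (real m) \<omega>) > C2 * real m powr \<xi>"
proof -
  have psd: "\<And>x. 0 \<le> x \<bullet> (matrix_inv S *v x)"
    using assms(2) by (rule pos_def_mat_inv_nonneg)
  obtain K where K: "0 < K" "\<And>v. Mnorm (matrix_inv S) v \<le> K * norm v"
    using Mnorm_le_norm[OF psd] by blast
  have "(\<lambda>m. 2 * K * (\<bar>C1\<bar> + \<bar>C2\<bar>) * real m powr (\<xi> - 1/2)) \<longlonglongrightarrow> 2 * K * (\<bar>C1\<bar> + \<bar>C2\<bar>) * 0"
    using assms(4) by (intro tendsto_mult tendsto_const tendsto_neg_powr filterlim_real_sequentially) auto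
  then have "\<forall>\<^sub>F m in sequentially. 2 * K * (\<bar>C1\<bar> + \<bar>C2\<bar>) * real m powr (\<xi> - 1/2) < \<epsilon>"
    using \<open>0 < \<epsilon>\<close> by (auto dest: order_tendstoD(2))
  with eventually_ge_at_top[of "1::nat"] show ?thesis
  proof eventually_elim
    case (elim m)
    note m = elim
    from indep_pair_BM_AE_zero[OF assms(1)[rule_format, of m]] show ?case
    proof eventually_elim
      case (elim \<omega>)
      show ?case
        using approx_error_gt_if_weighted_diff_gt[where Y = Y and ?W1.0 = "W1 m" and ?W2.0 = "W2 m",
            OF psd K(2) less_imp_le[OF K(1)] m(1) less_imp_le[OF assms(3)] assms(4,5) elim m(2)]
        by blast
    qed
  qed
qed

lemma (in finite_measure) measure_tendsto_zero_if_AE_covered: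
  assumes sets: "\<And>C m. A C m \<in> sets M" "\<And>C m. B C m \<in> sets M"
    and tightA: "\<And>r. 0 < r \<Longrightarrow> \<exists>C N. \<forall>m\<ge>N. measure M (A C m) \<le> r"
    and tightB: "\<And>r. 0 < r \<Longrightarrow> \<exists>C N. \<forall>m\<ge>N. measure M (B C m) \<le> r"
    and cover: "\<And>C1 C2. \<forall>\<^sub>F m in sequentially. AE \<omega> in M. \<omega> \<in> X m \<longrightarrow> \<omega> \<in> A C1 m \<union> B C2 m"
  shows "(\<lambda>m. measure M (X m)) \<longlonglongrightarrow> 0"
proof (rule LIMSEQ_I)
  fix r :: real assume "0 < r"
  obtain C1 N1 where N1: "\<And>m. m \<ge> N1 \<Longrightarrow> measure M (A C1 m) \<le> r / 3"
    using tightA[of "r / 3"] \<open>0 < r\<close> by auto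
  obtain C2 N2 where N2: "\<And>m. m \<ge> N2 \<Longrightarrow> measure M (B C2 m) \<le> r / 3"
    using tightB[of "r / 3"] \<open>0 < r\<close> by auto
  obtain N3 where N3: "\<And>m. m \<ge> N3 \<Longrightarrow> AE \<omega> in M. \<omega> \<in> X m \<longrightarrow> \<omega> \<in> A C1 m \<union> B C2 m"
    using cover[of C1 C2] unfolding eventually_sequentially by blast
  have "norm (measure M (X m) - 0) < r" if "m \<ge> max (max N1 N2) N3" for m
  proof -
    have "measure M (X m) \<le> measure M (A C1 m \<union> B C2 m)"
      using that sets by (intro finite_measure_mono_AE N3) auto
    also have "\<dots> \<le> measure M (A C1 m) + measure M (B C2 m)" using sets by (rule measure_Un_le)
    also have "\<dots> < r" using N1 N2 that \<open>0 < r\<close> by fastforce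
    finally show ?thesis by simp
  qed
  then show "\<exists>N. \<forall>m\<ge>N. norm (measure M (X m) - 0) < r" by blast
qed

theorem lemmaA1:
  fixes M :: "'a measure" and Y :: "nat \<Rightarrow> 'a \<Rightarrow> real^'p"
    and W1 W2 :: "nat \<Rightarrow> real \<Rightarrow> 'a \<Rightarrow> real^'p" and \<xi> \<eta> :: real
  assumes "prob_space M"
    and "\<forall>i. Y i \<in> borel_measurable M"
    and "\<forall>i c. integrable M (\<lambda>\<omega>. (Y i \<omega> $ c)\<^sup>2)"
    and "stationary_ts M Y"
    and "\<forall>m. indep_pair_BM M (W1 m) (W2 m)"
    and "summable (\<lambda>i. cov_mat M (Y 1) (Y (i + 2)) + cov_mat M (Y (i + 2)) (Y 1))"
    and "pos_def_mat (lr_cov M Y)"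
    and "0 < \<xi>" and "\<xi> < 1/2"
    and "\<forall>\<epsilon>>0. \<exists>C N. \<forall>m\<ge>N. measure M {\<omega>\<in>space M. \<exists>k>m.
           norm ((\<Sum>i\<in>{m+1..k}. Y i \<omega> - mean_vec M (Y 1))
                 - mat_sqrt (lr_cov M Y) *v W1 m (real (k - m)) \<omega>) > C * real (k - m) powr \<xi>} \<le> \<epsilon>"
    and "\<forall>\<epsilon>>0. \<exists>C N. \<forall>m\<ge>N. measure M {\<omega>\<in>space M.
           norm ((\<Sum>i\<in>{1..m}. Y i \<omega> - mean_vec M (Y 1))
                 - mat_sqrt (lr_cov M Y) *v W2 m (real m) \<omega>) > C * real m powr \<xi>} \<le> \<epsilon>"
    and "\<eta> > 0"
  shows "\<forall>\<epsilon>>0. (\<lambda>m. measure M {\<omega>\<in>space M. \<exists>k>m.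
           (real m / real k) powr (3/2 + \<eta>) *
           \<bar>Dtilde (lr_cov M Y) Y m k \<omega> - Dbar (lr_cov M Y) (W1 m) (W2 m) m k \<omega>\<bar> > \<epsilon>})
         \<longlonglongrightarrow> 0"
proof (intro allI impI)
  fix \<epsilon> :: real assume "0 < \<epsilon>"
  interpret prob_space M by (rule assms(1))
  define S where "S = lr_cov M Y"
  define \<mu> where "\<mu> = mean_vec M (Y 1)"
  define X where "X m = {\<omega>\<in>space M. \<exists>k>m. (real m / real k) powr (3/2 + \<eta>) *
           \<bar>Dtilde S Y m k \<omega> - Dbar S (W1 m) (W2 m) m k \<omega>\<bar> > \<epsilon>}" for m
  define A where "A C m = {\<omega>\<in>space M. \<exists>k>m.
           norm ((\<Sum>i\<in>{m+1..k}. Y i \<omega> - \<mu>) - mat_sqrt S *v W1 m (real (k - m)) \<omega>) > C * real (k - m) powr \<xi>}"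
    for C m
  define B where "B C m = {\<omega>\<in>space M.
           norm ((\<Sum>i\<in>{1..m}. Y i \<omega> - \<mu>) - mat_sqrt S *v W2 m (real m) \<omega>) > C * real m powr \<xi>}"
    for C m
  have [measurable]: "W1 m t \<in> borel_measurable M" "W2 m t \<in> borel_measurable M" "Y i \<in> borel_measurable M"
    for m t i
    using indep_pair_BM_measurable[OF assms(5)[rule_format]] assms(2) by blast+
  have "A C m \<in> sets M" "B C m \<in> sets M" for C m
    unfolding A_def B_def by measurable
  moreover have "\<exists>C N. \<forall>m\<ge>N. measure M (A C m) \<le> r" "\<exists>C N. \<forall>m\<ge>N. measure M (B C m) \<le> r" if "0 < r" for r
    using assms(10,11) that unfolding A_def B_def S_def \<mu>_def by blast+
  moreover have "\<forall>\<^sub>F m in sequentially. AE \<omega> in M. \<omega> \<in> X m \<longrightarrow> \<omega> \<in> A C1 m \<union> B C2 m" for C1 C2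
    using eventually_AE_approx_error_gt_if_weighted_diff_gt[where Y = Y and \<mu> = \<mu> and ?C1.0 = C1 and ?C2.0 = C2,
        OF assms(5) assms(7)[folded S_def] assms(8,9,12) \<open>0 < \<epsilon>\<close>]
    unfolding X_def A_def B_def by (elim eventually_mono) auto
  ultimately have "(\<lambda>m. measure M (X m)) \<longlonglongrightarrow> 0"
    by (rule measure_tendsto_zero_if_AE_covered)
  then show "(\<lambda>m. measure M {\<omega>\<in>space M. \<exists>k>m. (real m / real k) powr (3/2 + \<eta>) *
           \<bar>Dtilde (lr_cov M Y) Y m k \<omega> - Dbar (lr_cov M Y) (W1 m) (W2 m) m k \<omega>\<bar> > \<epsilon>}) \<longlonglongrightarrow> 0"
    unfolding X_def S_def .
qed

end
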